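(* Let $\alpha,\beta,\gamma,\kappa>0$ with $\mu:=\gamma-\alpha\beta>0$, and let $\lambda>0$. For $\eta\in\mathbb R$ define the polynomial $$p_\eta(z)=z^4+(\alpha+\kappa\lambda)z^3+(\beta\lambda+\alpha\kappa\lambda+\eta^2\lambda^2)z^2+(\gamma\lambda+\beta\kappa\lambda^2+\alpha\eta^2\lambda^2)z+\gamma\kappa\lambda^2.$$ Then for every $\eta\in\mathbb R$ with $|\eta|$ small enough, $p_\eta$ possesses a complex root $z_\eta$ with $\operatorname{Re} z_\eta>0$.
   Context: $p_\eta$ is the characteristic polynomial of the ODE system $\phi'''+\alpha\phi''+\beta\lambda\phi'+\gamma\lambda\phi-\eta\lambda\psi=0$, $\psi'+\kappa\lambda\psi+\eta\lambda\phi''+\alpha\eta\lambda\phi'=0$, obtained from single-mode solutions $u=\phi(t)w$, $\theta=\psi(t)w$ of the coupled MGT–Fourier system when $Aw=\lambda w$. *)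

theory Defs
  imports Complex_Main
begin

definition p_eta :: "real \<Rightarrow> real \<Rightarrow> real \<Rightarrow> real \<Rightarrow> real \<Rightarrow> real \<Rightarrow> complex \<Rightarrow> complex" where
  "p_eta \<alpha> \<beta> \<gamma> \<kappa> lam \<eta> z =
     z ^ 4
   + of_real (\<alpha> + \<kappa> * lam) * z ^ 3
   + of_real (\<beta> * lam + \<alpha> * \<kappa> * lam + \<eta>\<^sup>2 * lam\<^sup>2) * z ^ 2
   + of_real (\<gamma> * lam + \<beta> * \<kappa> * lam\<^sup>2 + \<alpha> * \<eta>\<^sup>2 * lam\<^sup>2) * z
   + of_real (\<gamma> * \<kappa> * lam\<^sup>2)"

end

(*
  If all roots of a real monic quartic lie in the closed left half-plane, the quartic splits
  into two real monic quadratics z^2 + p_i z + q_i whose roots also lie there, so p_i, q_i >= 0;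
  then the Hurwitz determinant a1 a2 a3 - a3^2 - a1^2 a4 = p1 p2 ((q1 - q2)^2 + (p1 + p2)(p1 q2 + p2 q1))
  is nonnegative. For p_eta this determinant is continuous in eta, and at eta = 0 it equals
  -lam (gamma - alpha beta) (k^3 + alpha k^2 + beta lam k + gamma lam) with k = kappa lam, which is
  negative. So it stays negative for small |eta|, and p_eta must have a root with Re z > 0.
*)

theory Submission
  imports Defs "HOL-Computational_Algebra.Fundamental_Theorem_Algebra"
begin

definition quartic :: "real \<Rightarrow> real \<Rightarrow> real \<Rightarrow> real \<Rightarrow> complex \<Rightarrow> complex" where
  "quartic a1 a2 a3 a4 z = z^4 + of_real a1 * z^3 + of_real a2 * z^2 + of_real a3 * z + of_real a4"

definition hurwitz_det3 :: "real \<Rightarrow> real \<Rightarrow> real \<Rightarrow> real \<Rightarrow> real" where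
  "hurwitz_det3 a1 a2 a3 a4 = a1 * a2 * a3 - a3^2 - a1^2 * a4"

lemma quartic_mult_quadratics:
  "(z^2 + of_real p1 * z + of_real q1) * (z^2 + of_real p2 * z + of_real q2) =
     quartic (p1 + p2) (q1 + q2 + p1 * p2) (p1 * q2 + p2 * q1) (q1 * q2) z"
  by (simp add: quartic_def algebra_simps power_numeral_reduce)

lemma monic_cubic_has_root: "\<exists>z::complex. z^3 + b1 * z^2 + b2 * z + b3 = 0"
proof -
  obtain z where "poly [:b3, b2, b1, 1:] z = 0"
    using fundamental_theorem_of_algebra[of "[:b3, b2, b1, 1:]"] by (auto simp: constant_degree)
  then show ?thesis by (auto simp: algebra_simps power_numeral_reduce)
qed

lemma monic_quartic_has_root: "\<exists>z::complex. z^4 + b1 * z^3 + b2 * z^2 + b3 * z + b4 = 0"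
proof -
  obtain z where "poly [:b4, b3, b2, b1, 1:] z = 0"
    using fundamental_theorem_of_algebra[of "[:b4, b3, b2, b1, 1:]"] by (auto simp: constant_degree)
  then show ?thesis by (auto simp: algebra_simps power_numeral_reduce)
qed

lemma monic_cubic_deflate:
  fixes b1 b2 b3 x z :: "'a::comm_ring_1"
  assumes "x^3 + b1 * x^2 + b2 * x + b3 = 0"
  shows "z^3 + b1 * z^2 + b2 * z + b3 = (z - x) * (z^2 + (b1 + x) * z + (b2 + x * (b1 + x)))"
proof -
  have "(z - x) * (z^2 + (b1 + x) * z + (b2 + x * (b1 + x))) =
      (z^3 + b1 * z^2 + b2 * z + b3) - (x^3 + b1 * x^2 + b2 * x + b3)"
    by (simp add: algebra_simps power_numeral_reduce)
  with assms show ?thesis by simp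
qed

lemma monic_quartic_deflate:
  fixes b1 b2 b3 b4 x z :: "'a::comm_ring_1"
  assumes "x^4 + b1 * x^3 + b2 * x^2 + b3 * x + b4 = 0"
  shows "z^4 + b1 * z^3 + b2 * z^2 + b3 * z + b4 =
    (z - x) * (z^3 + (b1 + x) * z^2 + (b2 + x * (b1 + x)) * z + (b3 + x * (b2 + x * (b1 + x))))"
proof -
  have "(z - x) * (z^3 + (b1 + x) * z^2 + (b2 + x * (b1 + x)) * z + (b3 + x * (b2 + x * (b1 + x)))) =
      (z^4 + b1 * z^3 + b2 * z^2 + b3 * z + b4) - (x^4 + b1 * x^3 + b2 * x^2 + b3 * x + b4)"
    by (simp add: algebra_simps power_numeral_reduce)
  with assms show ?thesis by simp
qed

lemma quartic_eq_iff:
  "quartic a1 a2 a3 a4 = quartic b1 b2 b3 b4 \<longleftrightarrow> (a1, a2, a3, a4) = (b1, b2, b3, b4)"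
proof -
  have "quartic a1 a2 a3 a4 = poly [:of_real a4, of_real a3, of_real a2, of_real a1, 1:]" for a1 a2 a3 a4
    by (auto simp: quartic_def algebra_simps power_numeral_reduce)
  then show ?thesis by (auto simp: poly_eq_poly_eq_iff)
qed

lemma quartic_factors_at_nonreal_root:
  assumes root: "quartic a1 a2 a3 a4 w = 0" and nonreal: "Im w \<noteq> 0"
  shows "\<exists>p1 q1 p2 q2. (a1, a2, a3, a4) = (p1 + p2, q1 + q2 + p1 * p2, p1 * q2 + p2 * q1, q1 * q2)"
proof -
  define p1 where "p1 = -2 * Re w"
  define q1 where "q1 = Re w ^ 2 + Im w ^ 2"
  define p2 where "p2 = a1 - p1"
  define q2 where "q2 = a2 - q1 - p1 * p2"
  define r1 where "r1 = a3 - (p1 * q2 + p2 * q1)"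
  define r0 where "r0 = a4 - q1 * q2"
  have "w^2 + of_real p1 * w + of_real q1 = 0"
    by (simp add: complex_eq_iff p1_def q1_def power2_eq_square algebra_simps)
  moreover have "quartic a1 a2 a3 a4 w =
      (w^2 + of_real p1 * w + of_real q1) * (w^2 + of_real p2 * w + of_real q2) + of_real r1 * w + of_real r0"
  proof -
    have "(a1, a2, a3, a4) = (p1 + p2, q1 + q2 + p1 * p2, p1 * q2 + p2 * q1 + r1, q1 * q2 + r0)"
      by (simp add: r1_def r0_def p2_def q2_def)
    then show ?thesis
      unfolding quartic_mult_quadratics by (simp add: quartic_def algebra_simps)
  qed
  ultimately have "of_real r1 * w + of_real r0 = 0"
    using root by simp
  then have "r1 = 0" "r0 = 0"
    using nonreal by (auto simp: complex_eq_iff)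
  then have "(a1, a2, a3, a4) = (p1 + p2, q1 + q2 + p1 * p2, p1 * q2 + p2 * q1, q1 * q2)"
    by (simp add: r1_def r0_def p2_def q2_def)
  then show ?thesis by blast
qed

lemma quartic_factors_if_roots_real:
  assumes real_roots: "\<And>z. quartic a1 a2 a3 a4 z = 0 \<Longrightarrow> Im z = 0"
  shows "\<exists>p1 q1 p2 q2. (a1, a2, a3, a4) = (p1 + p2, q1 + q2 + p1 * p2, p1 * q2 + p2 * q1, q1 * q2)"
proof -
  obtain w where w: "quartic a1 a2 a3 a4 w = 0"
    using monic_quartic_has_root unfolding quartic_def by blast
  define x0 where "x0 = Re w"
  define b1 where "b1 = a1 + x0"
  define b2 where "b2 = a2 + x0 * b1"
  define b3 where "b3 = a3 + x0 * b2"
  have "w = of_real x0"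
    using real_roots[OF w] by (simp add: complex_eq_iff x0_def)
  then have deflate0: "quartic a1 a2 a3 a4 z =
      (z - of_real x0) * (z^3 + of_real b1 * z^2 + of_real b2 * z + of_real b3)" for z
    using monic_quartic_deflate[of "of_real x0" "of_real a1" "of_real a2" "of_real a3" "of_real a4" z] w
    by (simp add: quartic_def b1_def b2_def b3_def)
  obtain v :: complex where v: "v^3 + of_real b1 * v^2 + of_real b2 * v + of_real b3 = 0"
    using monic_cubic_has_root by blast
  define x1 where "x1 = Re v"
  define c1 where "c1 = b1 + x1"
  define c2 where "c2 = b2 + x1 * c1"
  have "v = of_real x1"
    using real_roots[of v] deflate0[of v] v by (simp add: complex_eq_iff x1_def)
  then have deflate1: "z^3 + of_real b1 * z^2 + of_real b2 * z + of_real b3 =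
      (z - of_real x1) * (z^2 + of_real c1 * z + of_real c2)" for z :: complex
    using monic_cubic_deflate[of "of_real x1" "of_real b1" "of_real b2" "of_real b3" z] v
    by (simp add: c1_def c2_def)
  have "quartic a1 a2 a3 a4 z =
      (z^2 + of_real (- (x0 + x1)) * z + of_real (x0 * x1)) * (z^2 + of_real c1 * z + of_real c2)" for z
    unfolding deflate0 deflate1 by (simp add: algebra_simps power2_eq_square)
  then have "quartic a1 a2 a3 a4 = quartic (- (x0 + x1) + c1) (x0 * x1 + c2 + - (x0 + x1) * c1)
      (- (x0 + x1) * c2 + c1 * (x0 * x1)) (x0 * x1 * c2)"
    unfolding quartic_mult_quadratics by blast
  then show ?thesis
    unfolding quartic_eq_iff by blast
qed

lemma quartic_factors_into_quadratics:
  fixes a1 a2 a3 a4 :: real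
  shows "\<exists>p1 q1 p2 q2. (a1, a2, a3, a4) = (p1 + p2, q1 + q2 + p1 * p2, p1 * q2 + p2 * q1, q1 * q2)"
proof (cases "\<exists>w. quartic a1 a2 a3 a4 w = 0 \<and> Im w \<noteq> 0")
  case True
  then show ?thesis using quartic_factors_at_nonreal_root by blast
next
  case False
  then show ?thesis by (intro quartic_factors_if_roots_real) blast
qed

lemma quadratic_coeffs_nonneg_if_roots_in_left_halfplane:
  fixes p q :: real
  assumes roots: "\<And>z::complex. z^2 + of_real p * z + of_real q = 0 \<Longrightarrow> Re z \<le> 0"
  shows "0 \<le> p \<and> 0 \<le> q"
proof (cases "0 \<le> p^2 - 4 * q")
  case True
  define s where "s = sqrt (p^2 - 4 * q)"
  have s: "0 \<le> s" "s^2 = p^2 - 4 * q"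
    using True by (auto simp: s_def)
  have "((s - p) / 2)^2 + p * ((s - p) / 2) + q = 0"
    using s(2) by (simp add: power2_eq_square field_simps)
  then have "(of_real ((s - p) / 2) :: complex)^2 + of_real p * of_real ((s - p) / 2) + of_real q = 0"
    by (metis of_real_0 of_real_add of_real_mult of_real_power)
  then have "s \<le> p"
    using roots by fastforce
  moreover have "s^2 \<le> p^2"
    using \<open>s \<le> p\<close> s(1) by (simp add: power_mono)
  ultimately show ?thesis
    using s by simp
next
  case False
  define s where "s = sqrt (4 * q - p^2)"
  have "s^2 = 4 * q - p^2"
    using False by (simp add: s_def)
  then have "Complex (- p / 2) (s / 2) ^ 2 + of_real p * Complex (- p / 2) (s / 2) + of_real q = 0"
    by (simp add: complex_eq_iff power2_eq_square field_simps)
  then have "0 \<le> p"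
    using roots by fastforce
  moreover have "0 \<le> q"
    using False zero_le_power2[of p] by linarith
  ultimately show ?thesis ..
qed

lemma hurwitz_det3_nonneg_if_roots_in_left_halfplane:
  assumes roots: "\<And>z. quartic a1 a2 a3 a4 z = 0 \<Longrightarrow> Re z \<le> 0"
  shows "0 \<le> hurwitz_det3 a1 a2 a3 a4"
proof -
  obtain p1 q1 p2 q2 where a: "(a1, a2, a3, a4) = (p1 + p2, q1 + q2 + p1 * p2, p1 * q2 + p2 * q1, q1 * q2)"
    using quartic_factors_into_quadratics by blast
  then have factor: "quartic a1 a2 a3 a4 z =
      (z^2 + of_real p1 * z + of_real q1) * (z^2 + of_real p2 * z + of_real q2)" for z
    by (simp add: quartic_mult_quadratics)
  have "0 \<le> p1 \<and> 0 \<le> q1"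
    by (rule quadratic_coeffs_nonneg_if_roots_in_left_halfplane) (simp add: roots factor)
  moreover have "0 \<le> p2 \<and> 0 \<le> q2"
    by (rule quadratic_coeffs_nonneg_if_roots_in_left_halfplane) (simp add: roots factor)
  moreover have "hurwitz_det3 a1 a2 a3 a4 = p1 * p2 * ((q1 - q2)^2 + (p1 + p2) * (p1 * q2 + p2 * q1))"
    using a by (simp add: hurwitz_det3_def algebra_simps power2_eq_square)
  ultimately show ?thesis
    by simp
qed

lemma p_eta_eq_quartic:
  "p_eta \<alpha> \<beta> \<gamma> \<kappa> lam \<eta> = quartic (\<alpha> + \<kappa> * lam) (\<beta> * lam + \<alpha> * \<kappa> * lam + \<eta>\<^sup>2 * lam\<^sup>2)
     (\<gamma> * lam + \<beta> * \<kappa> * lam\<^sup>2 + \<alpha> * \<eta>\<^sup>2 * lam\<^sup>2) (\<gamma> * \<kappa> * lam\<^sup>2)"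
  by (simp add: fun_eq_iff p_eta_def quartic_def)

theorem proposition5p1:
  fixes \<alpha> \<beta> \<gamma> \<kappa> lam :: real
  assumes "\<alpha> > 0" and "\<beta> > 0" and "\<gamma> > 0" and "\<kappa> > 0"
    and "\<gamma> - \<alpha> * \<beta> > 0" and "lam > 0"
  shows "\<exists>\<delta>>0. \<forall>\<eta>::real. \<bar>\<eta>\<bar> < \<delta> \<longrightarrow>
           (\<exists>z::complex. p_eta \<alpha> \<beta> \<gamma> \<kappa> lam \<eta> z = 0 \<and> Re z > 0)"
proof -
  define D where "D \<eta> = hurwitz_det3 (\<alpha> + \<kappa> * lam) (\<beta> * lam + \<alpha> * \<kappa> * lam + \<eta>\<^sup>2 * lam\<^sup>2)
     (\<gamma> * lam + \<beta> * \<kappa> * lam\<^sup>2 + \<alpha> * \<eta>\<^sup>2 * lam\<^sup>2) (\<gamma> * \<kappa> * lam\<^sup>2)" for \<eta>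
  have "D 0 = - ((\<gamma> - \<alpha> * \<beta>) * lam) * ((\<kappa> * lam)^3 + \<alpha> * (\<kappa> * lam)^2 + \<beta> * lam * (\<kappa> * lam) + \<gamma> * lam)"
    by (simp add: D_def hurwitz_det3_def algebra_simps power2_eq_square power3_eq_cube)
  also have "\<dots> < 0"
    using assms by (simp add: mult_neg_pos add_pos_pos)
  finally have "D 0 < 0" .
  moreover have "isCont D 0"
    unfolding D_def hurwitz_det3_def by (intro continuous_intros)
  ultimately have "\<forall>\<^sub>F \<eta> in nhds 0. D \<eta> < 0"
    by (simp add: isCont_def tendsto_at_iff_tendsto_nhds order_tendstoD)
  then obtain \<delta> where "\<delta> > 0" and D_neg: "\<And>\<eta>. \<bar>\<eta>\<bar> < \<delta> \<Longrightarrow> D \<eta> < 0"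
    by (auto simp: eventually_nhds_metric dist_real_def)
  have "\<exists>z. p_eta \<alpha> \<beta> \<gamma> \<kappa> lam \<eta> z = 0 \<and> Re z > 0" if "\<bar>\<eta>\<bar> < \<delta>" for \<eta>
    using hurwitz_det3_nonneg_if_roots_in_left_halfplane D_neg[OF that]
    unfolding p_eta_eq_quartic D_def by (meson not_le)
  with \<open>\<delta> > 0\<close> show ?thesis
    by blast
qed

end
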